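(* For every $\varepsilon>0$ there exists $x_2=x_2(\varepsilon)$ such that for all $x\ge x_2$, $$\mathcal{J}(x) > \exp\left\{ (2-\varepsilon)\frac{\sqrt{\log x}}{\log\log x} \right\}.$$
   Context: A positive integer $n$ is a Jordan-Pólya number if it can be written as a product of factorials, i.e. $n=a_1!a_2!\cdots a_r!$ for some integer $r\ge 1$ and positive integers $a_1,\dots,a_r$ (so $1=1!$ is one). Let $\mathcal{J}$ be the set of Jordan-Pólya numbers and $\mathcal{J}(x)=\#\{n\le x: n\in\mathcal{J}\}$ its counting function. $\log$ denotes the natural logarithm. *)

theory Defs
  imports "HOL-Analysis.Analysis"
begin

definition jordan_polya :: "nat \<Rightarrow> bool" where
  "jordan_polya n \<longleftrightarrow>
     (\<exists>as :: nat list. as \<noteq> [] \<and> (\<forall>a\<in>set as. 0 < a) \<and> n = prod_list (map fact as))"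

definition JP_count :: "real \<Rightarrow> nat" where
  "JP_count x = card {n :: nat. 0 < n \<and> real n \<le> x \<and> jordan_polya n}"

end

theory Submission
  imports Defs "HOL-Library.Multiset" "HOL-Real_Asymp.Real_Asymp"
begin

text \<open>Fix \<open>k + 1\<close> primes \<open>\<le> y\<close>. The products of \<open>k\<close> factorials of these primes, taken with
  repetition, are pairwise distinct: in such a product the exponent of the largest prime involved
  is the number of times it occurs, so it can be cancelled. There are \<open>binom(2k, k) \<ge> 4\<^sup>k/(2k)\<close> of
  them, each at most \<open>(y!)\<^sup>k \<le> y\<^sup>y\<^sup>k\<close>. Chebyshev's elementary lower bound for the number of primes
  \<open>\<le> y\<close>, read off from the prime factorisation of the central binomial coefficient, lets us take
  \<open>y\<close> of order \<open>\<surd>(ln x)\<close> and \<open>k \<approx> ln x / (y ln y)\<close>, which yields more than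
  \<open>exp (2 \<surd>(ln x) / ln ln x)\<close> Jordan-Polya numbers up to \<open>x\<close>.\<close>

lemma multiplicity_less_self:
  assumes "prime (p::nat)" "m > 0"
  shows "multiplicity p m < m"
proof -
  have "multiplicity p m < 2 ^ multiplicity p m" by (rule less_exp)
  also have "\<dots> \<le> p ^ multiplicity p m"
    using prime_ge_2_nat[OF assms(1)] by (intro power_mono) auto
  also have "\<dots> \<le> m"
    using assms(2) by (intro dvd_imp_le multiplicity_dvd)
  finally show ?thesis .
qed

lemma multiplicity_fact_eq_sum:
  assumes p: "prime (p::nat)" and "n \<le> m"
  shows "multiplicity p (fact n :: nat) = (\<Sum>i=1..m. n div p ^ i)"
  using assms(2)
proof (induction n)
  case 0
  then show ?case by simp
next
  case (Suc n)
  have "{i \<in> {1..m}. p ^ i dvd Suc n} = {1..multiplicity p (Suc n)}"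
    using multiplicity_less_self[OF p, of "Suc n"] Suc.prems prime_gt_1_nat[OF p]
    by (auto simp: power_dvd_iff_le_multiplicity)
  then have multiplicity_Suc:
      "multiplicity p (Suc n) = (\<Sum>i=1..m. if p ^ i dvd Suc n then 1 else 0)"
    by (simp flip: sum.inter_filter)
  have "multiplicity p (fact (Suc n) :: nat) = multiplicity p (Suc n * fact n)"
    by (metis fact_Suc of_nat_id)
  also have "\<dots> = multiplicity p (Suc n) + multiplicity p (fact n :: nat)"
    using p by (intro prime_elem_multiplicity_mult_distrib) auto
  also have "\<dots> = (\<Sum>i=1..m. n div p ^ i + (if p ^ i dvd Suc n then 1 else 0))"
    using Suc multiplicity_Suc by (simp add: sum.distrib)
  also have "\<dots> = (\<Sum>i=1..m. Suc n div p ^ i)"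
    by (intro sum.cong refl) (auto simp: div_Suc mod_eq_0_iff_dvd)
  finally show ?case .
qed

lemma div_double_le: "(2 * n) div (q::nat) \<le> 2 * (n div q) + 1"
proof (cases "q = 0")
  case False
  have "n = q * (n div q) + n mod q" and "n mod q < q"
    using False by simp_all
  moreover have "q * (2 * (n div q) + 2) = 2 * (q * (n div q)) + 2 * q"
    by (simp add: algebra_simps)
  ultimately have "2 * n < q * (2 * (n div q) + 2)"
    by linarith
  then have "(2 * n) div q < 2 * (n div q) + 2"
    using False by (simp add: div_less_iff_less_mult mult.commute)
  then show ?thesis
    by simp
qed simp

lemma prime_power_multiplicity_central_binomial_le:
  assumes p: "prime (p::nat)" and n: "n > 0"
  shows "p ^ multiplicity p ((2 * n) choose n) \<le> 2 * n"
proof -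
  define T where "T = {i \<in> {1..2 * n}. p ^ i \<le> 2 * n}"
  have "fact (2 * n) = (fact n * fact n * ((2 * n) choose n) :: nat)"
    using binomial_fact_lemma[of n "2 * n"] by (simp add: mult_2)
  then have "multiplicity p (fact (2 * n) :: nat) =
      2 * multiplicity p (fact n :: nat) + multiplicity p ((2 * n) choose n)"
    using p by (simp add: prime_elem_multiplicity_mult_distrib)
  then have "multiplicity p ((2 * n) choose n) =
      (\<Sum>i=1..2 * n. (2 * n) div p ^ i) - 2 * (\<Sum>i=1..2 * n. n div p ^ i)"
    using multiplicity_fact_eq_sum[OF p, of n "2 * n"] multiplicity_fact_eq_sum[OF p, of "2 * n" "2 * n"]
    by simp
  also have "\<dots> \<le> (\<Sum>i=1..2 * n. if p ^ i \<le> 2 * n then 1 else 0)"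
  proof -
    have "(2 * n) div p ^ i \<le> 2 * (n div p ^ i) + (if p ^ i \<le> 2 * n then 1 else 0)" for i
      using div_double_le[of n "p ^ i"] by auto
    then have "(\<Sum>i=1..2 * n. (2 * n) div p ^ i) \<le> 2 * (\<Sum>i=1..2 * n. n div p ^ i)
        + (\<Sum>i=1..2 * n. if p ^ i \<le> 2 * n then 1 else 0)"
      by (simp add: sum_distrib_left flip: sum.distrib) (rule sum_mono)
    then show ?thesis by linarith
  qed
  also have "\<dots> = card T"
    by (simp add: T_def flip: sum.inter_filter)
  finally have "multiplicity p ((2 * n) choose n) \<le> card T" .
  moreover have "p ^ card T \<le> 2 * n"
  proof (rule ccontr)
    assume "\<not> p ^ card T \<le> 2 * n"
    have "T \<subseteq> {1..<card T}"
    proof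
      fix i assume "i \<in> T"
      then have "p ^ i < p ^ card T"
        using \<open>\<not> p ^ card T \<le> 2 * n\<close> by (auto simp: T_def)
      then show "i \<in> {1..<card T}"
        using \<open>i \<in> T\<close> prime_gt_1_nat[OF p] by (auto simp: T_def power_strict_increasing_iff)
    qed
    then have "card T \<le> card T - 1"
      using card_mono[of "{1..<card T}" T] by simp
    moreover have "card T > 0"
      using \<open>\<not> p ^ card T \<le> 2 * n\<close> n by (cases "card T") auto
    ultimately show False by simp
  qed
  ultimately show ?thesis
    using prime_gt_1_nat[OF p] by (meson order.trans power_increasing less_imp_le)
qed

definition primes_upto :: "nat \<Rightarrow> nat set" where
  "primes_upto y = {p. prime p \<and> p \<le> y}"

lemma finite_primes_upto [simp]: "finite (primes_upto y)"
  by (simp add: primes_upto_def)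

lemma central_binomial_le_power_card_primes:
  assumes n: "n > 0"
  shows "(2 * n) choose n \<le> (2 * n) ^ card (primes_upto (2 * n))"
proof -
  define C where "C = (2 * n) choose n"
  have "C > 0" by (simp add: C_def)
  have "prime_factors C \<subseteq> primes_upto (2 * n)"
  proof
    fix p assume p: "p \<in> prime_factors C"
    have "C dvd fact (2 * n)"
      using binomial_fact_lemma[of n "2 * n"] by (metis C_def dvd_triv_right le_add2 mult_2)
    then have "p dvd fact (2 * n)"
      using p by (auto intro: dvd_trans)
    then show "p \<in> primes_upto (2 * n)"
      using p prime_dvd_fact_iff[of p] by (auto simp: primes_upto_def)
  qed
  then have "card (prime_factors C) \<le> card (primes_upto (2 * n))"
    by (intro card_mono) auto
  have "C = (\<Prod>p\<in>prime_factors C. p ^ multiplicity p C)"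
    using prime_factorization_nat[OF \<open>C > 0\<close>] .
  also have "\<dots> \<le> (\<Prod>p\<in>prime_factors C. 2 * n)"
    by (intro prod_mono) (auto simp: C_def intro!: prime_power_multiplicity_central_binomial_le n)
  also have "\<dots> \<le> (2 * n) ^ card (primes_upto (2 * n))"
    unfolding prod_constant using n \<open>card (prime_factors C) \<le> card (primes_upto (2 * n))\<close>
    by (intro power_increasing) auto
  finally show ?thesis by (simp add: C_def)
qed

lemma chebyshev_lower_bound:
  assumes y: "y \<ge> 2"
  shows "(real y - 1) * ln 2 - ln y \<le> card (primes_upto y) * ln y"
proof -
  define n where "n = y div 2"
  have n: "n > 0" "2 * n \<le> y" "real y - 1 \<le> 2 * real n"
    using y unfolding n_def by linarith+
  have "real n * ln 4 - ln (2 * real n) = ln (4 ^ n / (2 * real n))"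
    using n by (simp add: ln_div ln_realpow)
  also have "\<dots> \<le> ln (real ((2 * n) choose n))"
    using n central_binomial_lower_bound[of n] by (intro ln_mono) auto
  also have "\<dots> \<le> ln (real ((2 * n) ^ card (primes_upto (2 * n))))"
    using n by (intro ln_mono of_nat_mono central_binomial_le_power_card_primes) auto
  also have "\<dots> = card (primes_upto (2 * n)) * ln (2 * real n)"
    using n ln_realpow[of "2 * real n" "card (primes_upto (2 * n))"] by simp
  also have "\<dots> \<le> card (primes_upto y) * ln y"
    using n by (intro mult_mono ln_mono of_nat_mono card_mono) (auto simp: primes_upto_def)
  finally have "real n * ln 4 - ln (2 * real n) \<le> card (primes_upto y) * ln y" .
  moreover have "real n * ln 4 = 2 * real n * ln 2"
    using ln_realpow[of 2 2] by simp
  moreover have "(real y - 1) * ln 2 \<le> 2 * real n * ln 2"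
    using n by (intro mult_right_mono) auto
  moreover have "ln (2 * real n) \<le> ln y"
    using n by (intro ln_mono) auto
  ultimately show ?thesis by linarith
qed

definition fact_prod :: "nat multiset \<Rightarrow> nat" where
  "fact_prod M = prod_mset (image_mset fact M)"

lemma fact_prod_empty [simp]: "fact_prod {#} = 1"
  and fact_prod_add_mset [simp]: "fact_prod (add_mset a M) = fact a * fact_prod M"
  by (simp_all add: fact_prod_def)

lemma fact_prod_pos: "fact_prod M > 0"
  by (induction M) auto

lemma fact_prod_le: "(\<And>a. a \<in># M \<Longrightarrow> a \<le> y) \<Longrightarrow> fact_prod M \<le> fact y ^ size M"
  by (induction M) (auto intro!: mult_le_mono fact_mono)

lemma jordan_polya_fact_prod: "jordan_polya (fact_prod M)"
proof -
  obtain xs where "mset xs = M"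
    using ex_mset by blast
  moreover have "fact_prod (mset xs) = prod_list (map fact (1 # filter (\<lambda>a. 0 < a) xs))" for xs
    by (induction xs) auto
  ultimately show ?thesis
    unfolding jordan_polya_def by (intro exI[of _ "1 # filter (\<lambda>a. 0 < a) xs"]) auto
qed

lemma multiplicity_fact_le_prime:
  assumes q: "prime (q::nat)" and "a \<le> q"
  shows "multiplicity q (fact a :: nat) = (if a = q then 1 else 0)"
proof (cases "a = q")
  case True
  have "\<not> q dvd fact (q - 1)"
    using prime_dvd_fact_iff[OF q] prime_gt_0_nat[OF q] by simp
  moreover have "(fact q :: nat) = q * fact (q - 1)"
    using fact_reduce[of q, where 'a = nat] prime_gt_0_nat[OF q] by simp
  ultimately show ?thesis
    using True q by (simp add: prime_elem_multiplicity_mult_distrib not_dvd_imp_multiplicity_0)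
next
  case False
  then have "\<not> q dvd fact a"
    using prime_dvd_fact_iff[OF q] assms(2) by simp
  then show ?thesis
    using False by (simp add: not_dvd_imp_multiplicity_0)
qed

lemma multiplicity_fact_prod_max_prime:
  assumes q: "prime (q::nat)" and "\<And>a. a \<in># M \<Longrightarrow> a \<le> q"
  shows "multiplicity q (fact_prod M) = count M q"
  using assms(2)
proof (induction M)
  case empty
  then show ?case by simp
next
  case (add a M)
  then show ?case
    using q fact_prod_pos[of M] multiplicity_fact_le_prime[OF q, of a]
    by (simp add: prime_elem_multiplicity_mult_distrib)
qed

lemma fact_prod_inj_on_primes:
  assumes "\<And>p. p \<in># M \<Longrightarrow> prime p" and "\<And>p. p \<in># N \<Longrightarrow> prime p"
    and "fact_prod M = fact_prod N"
  shows "M = N"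
  using assms
proof (induction "size M + size N" arbitrary: M N rule: less_induct)
  case less
  show ?case
  proof (cases "M + N = {#}")
    case True
    then show ?thesis by simp
  next
    case False
    define q where "q = Max (set_mset (M + N))"
    have "q \<in># M + N"
      using False unfolding q_def by (intro Max_in) auto
    then have "prime q"
      using less.prems by auto
    have "a \<le> q" if "a \<in># M + N" for a
      using that by (simp add: q_def)
    then have "count M q = count N q"
      using multiplicity_fact_prod_max_prime[OF \<open>prime q\<close>] less.prems(3) by (metis union_iff)
    then have "q \<in># M" "q \<in># N"
      using \<open>q \<in># M + N\<close> by (auto simp flip: count_greater_zero_iff)
    then obtain M' N' where M': "M = add_mset q M'" and N': "N = add_mset q N'"
      by (meson mset_add)
    have "fact_prod M' = fact_prod N'"
      using less.prems(3) by (simp add: M' N')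
    then have "M' = N'"
      using less.hyps less.prems(1,2) by (simp add: M' N')
    then show ?thesis
      by (simp add: M' N')
  qed
qed

lemma central_binomial_le_JP_count:
  assumes "k + 1 \<le> card (primes_upto y)" and "real (fact y ^ k) \<le> x"
  shows "(2 * k) choose k \<le> JP_count x"
proof -
  obtain P where P: "P \<subseteq> primes_upto y" "card P = k + 1" "finite P"
    by (rule obtain_subset_with_card_n[OF assms(1)])
  define J where "J = {n :: nat. 0 < n \<and> real n \<le> x \<and> jordan_polya n}"
  have "finite J"
    by (rule finite_subset[of J "{..nat \<lfloor>x\<rfloor>}"]) (auto simp: J_def le_nat_floor)
  have "inj_on fact_prod (multisets_of_size P k)"
    using P(1) by (intro inj_onI fact_prod_inj_on_primes)
      (auto simp: multisets_of_size_def primes_upto_def)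
  moreover have "fact_prod ` multisets_of_size P k \<subseteq> J"
  proof
    fix n assume "n \<in> fact_prod ` multisets_of_size P k"
    then obtain M where M: "set_mset M \<subseteq> P" "size M = k" "n = fact_prod M"
      by (auto simp: multisets_of_size_def)
    then have "fact_prod M \<le> fact y ^ k"
      using P(1) fact_prod_le[of M y] by (auto simp: primes_upto_def)
    then have "real n \<le> x"
      using M(3) assms(2) by (metis of_nat_le_iff order_trans)
    then show "n \<in> J"
      using M(3) fact_prod_pos jordan_polya_fact_prod by (simp add: J_def)
  qed
  ultimately have "card (multisets_of_size P k) \<le> card J"
    using \<open>finite J\<close> by (rule card_inj_on_le)
  then show ?thesis
    using card_multisets_of_size[OF P(3), of k] P(2)
    by (simp add: JP_count_def J_def mult_2)
qed


text \<open>With these parameters every product of \<open>k\<close> factorials of primes \<open>\<le> y\<close> is at most \<open>e\<^sup>L\<close>,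
  and Chebyshev's bound provides \<open>k + 1\<close> primes \<open>\<le> y\<close>.\<close>
definition admissible_params :: "real \<Rightarrow> nat \<Rightarrow> nat \<Rightarrow> bool" where
  "admissible_params L y k \<longleftrightarrow> 2 \<le> y \<and> 1 \<le> k \<and> real y * real k * ln y \<le> L
     \<and> (real k + 1) * ln y \<le> (real y - 1) * ln 2 - ln y"

lemma four_pow_div_le_JP_count:
  assumes "admissible_params (ln x) y k" and x: "x > 0"
  shows "4 ^ k / (2 * real k) \<le> real (JP_count x)"
proof -
  have y: "y \<ge> 2" and k: "k \<ge> 1"
    and primes: "(real k + 1) * ln y \<le> (real y - 1) * ln 2 - ln y"
    and size: "real y * real k * ln y \<le> ln x"
    using assms by (auto simp: admissible_params_def)
  have "ln y > 0"
    using y by simp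
  moreover have "(real k + 1) * ln y \<le> card (primes_upto y) * ln y"
    using primes chebyshev_lower_bound[OF y] by linarith
  ultimately have "k + 1 \<le> card (primes_upto y)"
    by (simp add: mult_le_cancel_right)
  moreover have "real (fact y ^ k) \<le> x"
  proof -
    have "real (fact y ^ k) \<le> (real y ^ y) ^ k"
      using fact_le_power[of y, where 'a = real] by (simp add: power_mono)
    also have "\<dots> = exp (ln (real y)) ^ (y * k)"
      using y by (simp add: power_mult)
    also have "\<dots> = exp (real y * real k * ln y)"
      by (simp add: mult_ac flip: exp_of_nat_mult)
    also have "\<dots> \<le> x"
      using size x by (metis exp_le_cancel_iff exp_ln)
    finally show ?thesis .
  qed
  ultimately have "(2 * k) choose k \<le> JP_count x"
    by (rule central_binomial_le_JP_count)
  then show ?thesis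
    using central_binomial_lower_bound[of k] k by simp
qed

text \<open>Take \<open>y \<approx> (5/4) \<surd>L\<close> and \<open>k \<approx> L / (y ln y)\<close>: then \<open>y\<^sup>2 ln 2 \<ge> (25/24) L\<close> leaves room for
  \<open>k + 1\<close> primes, and \<open>k ln 4 \<approx> (8 ln 4 / 5) \<surd>L / ln L\<close> with \<open>8 ln 4 / 5 > 2\<close>.\<close>
lemma admissible_params_exist:
  fixes L s :: real
  assumes s: "s = 5/4 * sqrt L" "3 \<le> s"
    and primes: "L + (s + 1) * (1 + 2 * ln (s + 1)) \<le> 25/24 * L"
    and k_ge: "2 \<le> L / ((s + 1) * ln (s + 1))"
    and growth: "2 * sqrt L / ln L \<le> (L / ((s + 1) * ln (s + 1)) - 1) * (4/3) - ln (2 * L)"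
  shows "\<exists>y k. admissible_params L y k \<and> 2 * sqrt L / ln L \<le> real k * ln 4 - ln (2 * real k)"
proof -
  have "sqrt L > 0"
    using s by linarith
  then have "L > 0"
    by simp
  have s_sq: "s * s = 25/16 * L"
    using \<open>L > 0\<close> unfolding s(1) by (simp add: algebra_simps)
  define y where "y = nat \<lceil>s\<rceil>"
  have y: "s \<le> real y" "real y \<le> s + 1" "y \<ge> 2"
    using s unfolding y_def by linarith+
  have ln2: "2/3 \<le> ln (2::real)" "ln (2::real) \<le> 1"
    using ln2_ge_two_thirds ln_2_less_1 by auto
  have "ln 2 \<le> ln (real y)"
    using y by (intro ln_mono) auto
  then have ln_y: "2/3 \<le> ln (real y)"
    using ln2 by linarith
  have "2 * (2/3) \<le> real y * ln y"
    using y ln_y by (intro mult_mono) auto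
  moreover have "real y * ln y \<le> (s + 1) * ln (s + 1)"
    using y ln_y by (intro mult_mono ln_mono) auto
  ultimately have y_ln_y: "1 \<le> real y * ln y" "real y * ln y \<le> (s + 1) * ln (s + 1)"
    by linarith+
  define A where "A = L / (real y * ln y)"
  have A: "L / ((s + 1) * ln (s + 1)) \<le> A" "A \<le> L"
    using \<open>L > 0\<close> y_ln_y divide_left_mono[of 1 "real y * ln y" L]
    unfolding A_def by (auto intro: divide_left_mono)
  define k where "k = nat \<lfloor>A\<rfloor>"
  have k: "real k \<le> A" "A - 1 < real k" "k \<ge> 1"
    using A k_ge unfolding k_def by linarith+
  have "real k * (real y * ln y) \<le> L"
    using k(1) y_ln_y by (simp add: A_def pos_le_divide_eq)
  then have size: "real y * real k * ln y \<le> L"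
    by (simp add: mult_ac)
  have "(real k + 1) * ln y \<le> (real y - 1) * ln 2 - ln y"
  proof -
    have "real y * ((real k + 1) * ln y) = real y * real k * ln y + real y * ln y"
      by (simp add: algebra_simps)
    also have "\<dots> \<le> L + (s + 1) * ln (s + 1)"
      using size y_ln_y by linarith
    also have "\<dots> \<le> 2/3 * (s * s) - (s + 1) - (s + 1) * ln (s + 1)"
    proof -
      have "(s + 1) * (1 + 2 * ln (s + 1)) = (s + 1) + 2 * ((s + 1) * ln (s + 1))"
        by (simp add: algebra_simps)
      then show ?thesis
        using primes s_sq by linarith
    qed
    also have "\<dots> \<le> ln 2 * (real y * real y) - real y * ln 2 - real y * ln y"
    proof -
      have "2/3 * (s * s) \<le> ln 2 * (real y * real y)"
        using ln2 y s by (intro mult_mono) auto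
      moreover have "real y * ln 2 \<le> s + 1"
        using y mult_left_mono[OF ln2(2) of_nat_0_le_iff[of y]] by linarith
      ultimately show ?thesis
        using y_ln_y by linarith
    qed
    also have "\<dots> = real y * ((real y - 1) * ln 2 - ln y)"
      by (simp add: algebra_simps)
    finally show ?thesis
      using y by (simp add: mult_le_cancel_left_pos)
  qed
  moreover have "2 * sqrt L / ln L \<le> real k * ln 4 - ln (2 * real k)"
  proof -
    have "ln (4::real) = 2 * ln 2"
      using ln_realpow[of 2 2] by simp
    then have "(A - 1) * (4/3) \<le> real k * ln 4"
      using k ln2 by (intro mult_mono) auto
    moreover have "ln (2 * real k) \<le> ln (2 * L)"
      using k A by (intro ln_mono) auto
    moreover have "(L / ((s + 1) * ln (s + 1)) - 1) * (4/3) \<le> (A - 1) * (4/3)"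
      using A by simp
    ultimately show ?thesis
      using growth by linarith
  qed
  ultimately show ?thesis
    using y k size by (auto simp: admissible_params_def)
qed

lemma eventually_exp_le_JP_count:
  "eventually (\<lambda>x. exp (2 * sqrt (ln x) / ln (ln x)) \<le> real (JP_count x)) at_top"
proof -
  define s :: "real \<Rightarrow> real" where "s L = 5/4 * sqrt L" for L
  have "eventually (\<lambda>L. 3 \<le> s L \<and> L + (s L + 1) * (1 + 2 * ln (s L + 1)) \<le> 25/24 * L
      \<and> 2 \<le> L / ((s L + 1) * ln (s L + 1))
      \<and> 2 * sqrt L / ln L \<le> (L / ((s L + 1) * ln (s L + 1)) - 1) * (4/3) - ln (2 * L)) at_top"
    unfolding s_def by (intro eventually_conj; real_asymp)
  then have "eventually (\<lambda>L. \<exists>y k. admissible_params L y k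
      \<and> 2 * sqrt L / ln L \<le> real k * ln 4 - ln (2 * real k)) at_top"
    by eventually_elim (rule admissible_params_exist[OF s_def], auto)
  then have "eventually (\<lambda>x. \<exists>y k. admissible_params (ln x) y k
      \<and> 2 * sqrt (ln x) / ln (ln x) \<le> real k * ln 4 - ln (2 * real k)) at_top"
    using ln_at_top by (rule eventually_compose_filterlim)
  then show ?thesis
    using eventually_gt_at_top[of 0]
  proof eventually_elim
    case (elim x)
    then obtain y k where "admissible_params (ln x) y k"
      and growth: "2 * sqrt (ln x) / ln (ln x) \<le> real k * ln 4 - ln (2 * real k)"
      by blast
    then have "k \<ge> 1"
      by (simp add: admissible_params_def)
    have "exp (2 * sqrt (ln x) / ln (ln x)) \<le> exp (real k * ln 4 - ln (2 * real k))"
      using growth by simp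
    also have "\<dots> = 4 ^ k / (2 * real k)"
      using \<open>k \<ge> 1\<close> by (simp add: exp_diff exp_of_nat_mult)
    also have "\<dots> \<le> real (JP_count x)"
      using four_pow_div_le_JP_count \<open>admissible_params (ln x) y k\<close> elim by blast
    finally show ?case .
  qed
qed

theorem mainTheorem2:
  fixes \<epsilon> :: real
  assumes "\<epsilon> > 0"
  shows "\<exists>x2 :: real. \<forall>x \<ge> x2.
           real (JP_count x) > exp ((2 - \<epsilon>) * sqrt (ln x) / ln (ln x))"
proof -
  have "eventually (\<lambda>x::real. ln (ln x) > 0 \<and> ln x > 0) at_top"
    by (intro eventually_conj; real_asymp)
  with eventually_exp_le_JP_count
  have "eventually (\<lambda>x. real (JP_count x) > exp ((2 - \<epsilon>) * sqrt (ln x) / ln (ln x))) at_top"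
  proof eventually_elim
    case (elim x)
    then have "(2 - \<epsilon>) * sqrt (ln x) / ln (ln x) < 2 * sqrt (ln x) / ln (ln x)"
      using elim assms by (simp add: divide_strict_right_mono)
    then show ?case
      using elim by (meson exp_less_cancel_iff less_le_trans)
  qed
  then show ?thesis
    by (simp add: eventually_at_top_linorder)
qed

end
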